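(* Consider an advertiser in a repeated single-slot hybrid auction with per-click value $v>0$ that knows its true click-through rate $p$, while the auctioneer's initial prior on this rate is $\mathrm{Beta}(\alpha,\beta)$ (density proportional to $x^{\alpha-1}(1-x)^{\beta-1}$), Bayes-updated after each impression, so that after $T$ impressions with $N$ clicks it is $\mathrm{Beta}(\alpha+N,\beta+T-N)$ with mean $(\alpha+N)/(\alpha+\beta+T)$. Fix $\epsilon>0$ and let $p'=p(1-\epsilon)$. In the explore phase the advertiser bids $(vp',v)$ (per-impression bid $vp'$, per-click bid $v$), receiving impressions charged per impression, and the explore phase stops as soon as the auctioneer's posterior mean is at least $p(1-\epsilon)$ (so it has length $0$ if the initial mean $\alpha/(\alpha+\beta)$ is already at least $p(1-\epsilon)$). If the explore phase consists of $T$ impressions resulting in $N$ clicks, its worst-case loss in revenue for the advertiser is defined as $v(Tp'-N)$. Then the explore phase incurs no loss in revenue for the advertiser, i.e. $v(Tp'-N)\le 0$.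
   Context: Loss in revenue means the amount paid to the auctioneer minus the value earned from actual clicks; in the explore phase the per-impression price is at most the per-impression bid $vp'$, which gives the worst-case loss $v(Tp'-N)$. *)

theory Defs
  imports Complex_Main
begin

text \<open>Click outcomes of successive impressions: c i = True iff impression i (0-based) got a click.
  num_clicks c t = number of clicks among the first t impressions.\<close>
definition num_clicks :: "(nat \<Rightarrow> bool) \<Rightarrow> nat \<Rightarrow> nat" where
  "num_clicks c t = card {i. i < t \<and> c i}"

definition posterior_mean :: "real \<Rightarrow> real \<Rightarrow> (nat \<Rightarrow> bool) \<Rightarrow> nat \<Rightarrow> real" where
  "posterior_mean \<alpha> \<beta> c t = (\<alpha> + real (num_clicks c t)) / (\<alpha> + \<beta> + real t)"

definition explore_length :: "real \<Rightarrow> real \<Rightarrow> real \<Rightarrow> (nat \<Rightarrow> bool) \<Rightarrow> nat \<Rightarrow> bool" where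
  "explore_length \<alpha> \<beta> p' c T \<longleftrightarrow>
     posterior_mean \<alpha> \<beta> c T \<ge> p' \<and> (\<forall>t<T. posterior_mean \<alpha> \<beta> c t < p')"

definition worst_case_loss :: "real \<Rightarrow> real \<Rightarrow> nat \<Rightarrow> nat \<Rightarrow> real" where
  "worst_case_loss v p' T N = v * (real T * p' - real N)"

end

theory Submission
  imports Defs
begin

text \<open>If the explore phase is nonempty, the initial mean \<open>\<alpha>/(\<alpha>+\<beta>)\<close> lies below the threshold
  \<open>p'\<close> while the final mean \<open>(\<alpha>+N)/(\<alpha>+\<beta>+T)\<close> reaches it. Subtracting
  \<open>\<alpha> < p'(\<alpha>+\<beta>)\<close> from \<open>p'(\<alpha>+\<beta>+T) \<le> \<alpha>+N\<close> gives \<open>p' T < N\<close>: the advertiser paid less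
  per impression than its clicks were worth.\<close>

lemma posterior_mean_crossing_clicks_ge:
  assumes "\<alpha> + \<beta> > 0" and "\<alpha> + \<beta> + real T > 0"
    and "posterior_mean \<alpha> \<beta> c 0 < p'" and "posterior_mean \<alpha> \<beta> c T \<ge> p'"
  shows "real T * p' \<le> real (num_clicks c T)"
proof -
  have initial: "\<alpha> < p' * (\<alpha> + \<beta>)"
    using assms(1,3) by (simp add: posterior_mean_def num_clicks_def divide_less_eq)
  have final: "p' * (\<alpha> + \<beta> + real T) \<le> \<alpha> + real (num_clicks c T)"
    using assms(2,4) by (simp add: posterior_mean_def le_divide_eq)
  show ?thesis
    using initial final by (simp add: algebra_simps)
qed

lemma explore_length_clicks_ge:
  assumes "\<alpha> + \<beta> > 0" and "explore_length \<alpha> \<beta> p' c T"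
  shows "real T * p' \<le> real (num_clicks c T)"
proof (cases "T = 0")
  case False
  with assms show ?thesis
    unfolding explore_length_def
    by (intro posterior_mean_crossing_clicks_ge) auto
qed simp

theorem claim1:
  fixes v p \<epsilon> \<alpha> \<beta> :: real and c :: "nat \<Rightarrow> bool" and T :: nat
  assumes "v > 0" and "0 \<le> p" and "p \<le> 1" and "\<epsilon> > 0"
    and "\<alpha> > 0" and "\<beta> > 0"
    and "explore_length \<alpha> \<beta> (p * (1 - \<epsilon>)) c T"
  shows "worst_case_loss v (p * (1 - \<epsilon>)) T (num_clicks c T) \<le> 0"
proof -
  have "real T * (p * (1 - \<epsilon>)) - real (num_clicks c T) \<le> 0"
    using explore_length_clicks_ge[OF _ assms(7)] assms(5,6) by simp
  with assms(1) show ?thesis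
    unfolding worst_case_loss_def by (simp add: mult_nonneg_nonpos)
qed

end
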